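(* Let $f$ be convex, $C^2$, with $\nabla^2 f\succ0$ everywhere, and $L_{\text{semi}}$-semi-strongly self-concordant; let $L_{\text{est}}\ge L_{\text{semi}}$, let $x_k\in\mathbb{R}^d$ with $\nabla f(x_k)\ne0$, and let $x_{k+1}$ be the AICN iterate from $x_k$ with stepsize $\alpha_k$. Then: (i) $\|\nabla f(x_{k+1})\|_{x_k}^*\le L_{\text{est}}\alpha_k^2\big(\|\nabla f(x_k)\|_{x_k}^*\big)^2< L_{\text{est}}\big(\|\nabla f(x_k)\|_{x_k}^*\big)^2$. (ii) If moreover $0<c<1$ and $\|\nabla f(x_k)\|_{x_k}^*\le\frac{(2c+1)^2-1}{2L_{\text{est}}}$, then $\|\nabla f(x_{k+1})\|_{x_{k+1}}^*\le\frac{L_{\text{est}}\alpha_k^2}{1-c}\big(\|\nabla f(x_k)\|_{x_k}^*\big)^2$. (iii) If in addition to (ii) also $\|\nabla f(x_k)\|_{x_k}^*\le\frac{(2-c)^2-1}{2L_{\text{est}}}$, then $\|\nabla f(x_{k+1})\|_{x_{k+1}}^*\le\|\nabla f(x_k)\|_{x_k}^*$.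
   Context: Local norms: $\|h\|_x=\langle\nabla^2 f(x)h,h\rangle^{1/2}$, $\|g\|_x^*=\langle g,[\nabla^2 f(x)]^{-1}g\rangle^{1/2}$; $\|H\|_{op}=\sup_{v\neq0}\|Hv\|_x^*/\|v\|_x$ at base point $x$. $f$ is $L_{\text{semi}}$-semi-strongly self-concordant if $\|\nabla^2 f(y)-\nabla^2 f(x)\|_{op}\le L_{\text{semi}}\|y-x\|_x$ for all $x,y$ (operator norm at base point $x$). AICN step with parameter $L_{\text{est}}>0$: $x_{k+1}=x_k-\alpha_k[\nabla^2 f(x_k)]^{-1}\nabla f(x_k)$ with $\alpha_k=\frac{-1+\sqrt{1+2L_{\text{est}}\|\nabla f(x_k)\|_{x_k}^*}}{L_{\text{est}}\|\nabla f(x_k)\|_{x_k}^*}$. *)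

theory Defs
  imports "HOL-Analysis.Analysis"
begin

definition lnorm :: "(real^'n \<Rightarrow> real^'n^'n) \<Rightarrow> real^'n \<Rightarrow> real^'n \<Rightarrow> real" where
  "lnorm H x h = sqrt (h \<bullet> (H x *v h))"

definition dnorm :: "(real^'n \<Rightarrow> real^'n^'n) \<Rightarrow> real^'n \<Rightarrow> real^'n \<Rightarrow> real" where
  "dnorm H x g = sqrt (g \<bullet> (matrix_inv (H x) *v g))"

definition opnorm :: "(real^'n \<Rightarrow> real^'n^'n) \<Rightarrow> real^'n \<Rightarrow> real^'n^'n \<Rightarrow> real" where
  "opnorm H x A = (SUP v\<in>{v. v \<noteq> 0}. dnorm H x (A *v v) / lnorm H x v)"

definition semi_strongly_sc :: "real \<Rightarrow> (real^'n \<Rightarrow> real^'n^'n) \<Rightarrow> bool" where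
  "semi_strongly_sc L H \<longleftrightarrow> (\<forall>x y. opnorm H x (H y - H x) \<le> L * lnorm H x (y - x))"

definition aicn_alpha :: "real \<Rightarrow> (real^'n \<Rightarrow> real^'n) \<Rightarrow> (real^'n \<Rightarrow> real^'n^'n) \<Rightarrow> real^'n \<Rightarrow> real" where
  "aicn_alpha L g H x =
     (-1 + sqrt (1 + 2 * L * dnorm H x (g x))) / (L * dnorm H x (g x))"

definition aicn_step :: "real \<Rightarrow> (real^'n \<Rightarrow> real^'n) \<Rightarrow> (real^'n \<Rightarrow> real^'n^'n) \<Rightarrow> real^'n \<Rightarrow> real^'n" where
  "aicn_step L g H x = x - aicn_alpha L g H x *\<^sub>R (matrix_inv (H x) *v g x)"

end

theory Submission
  imports Defs
begin

text \<open>Write \<open>G = \<parallel>\<nabla>f(x)\<parallel>\<^sup>*\<^sub>x\<close> and \<open>\<alpha>\<close> for the AICN stepsize, the positive root of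
  \<open>L G \<alpha>\<^sup>2 / 2 + \<alpha> = 1\<close>. Semi-strong self-concordance bounds the Hessian variation along the
  step, so the Taylor remainder of the gradient has local dual norm at most \<open>L (\<alpha> G)\<^sup>2 / 2\<close>,
  while the damped Newton direction leaves \<open>(1 - \<alpha>) G\<close> of the gradient; by the choice of
  \<open>\<alpha>\<close> these add up to \<open>L \<alpha>\<^sup>2 G\<^sup>2\<close>. Passing to the local norm at the new point costs the
  factor \<open>sqrt (1 + L r)\<close>, \<open>r\<close> the length of the step measured there, and the hypothesis on
  \<open>G\<close> keeps it below \<open>1 / (1 - c)\<close>.\<close>

section \<open>Positive definite matrices and local norms\<close>

lemma matrix_inv_cancel_injective:
  fixes A :: "real^'n^'n"
  assumes inj: "\<And>v. A *v v = 0 \<Longrightarrow> v = 0"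
  shows "A *v (matrix_inv A *v v) = v"
proof -
  have "invertible A"
    using inj matrix_left_invertible_ker invertible_left_inverse by blast
  then have "\<exists>A'. A ** A' = mat 1 \<and> A' ** A = mat 1"
    unfolding invertible_def .
  then have "A ** matrix_inv A = mat 1"
    unfolding matrix_inv_def by (rule someI2_ex) blast
  then show ?thesis
    by (metis matrix_vector_mul_assoc matrix_vector_mul_lid)
qed

lemma pos_def_quadratic_form_Cauchy_Schwarz:
  fixes A :: "real^'n^'n"
  assumes pd: "\<And>h. h \<noteq> 0 \<Longrightarrow> 0 < h \<bullet> (A *v h)"
    and sym: "\<And>u w. u \<bullet> (A *v w) = w \<bullet> (A *v u)"
  shows "(u \<bullet> (A *v w))\<^sup>2 \<le> (u \<bullet> (A *v u)) * (w \<bullet> (A *v w))"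
proof (cases "w = 0")
  case True
  then show ?thesis by simp
next
  case False
  define a b c where "a = u \<bullet> (A *v u)" and "b = u \<bullet> (A *v w)" and "c = w \<bullet> (A *v w)"
  have c: "c > 0" using pd False c_def by auto
  define t where "t = - b / c"
  have "0 \<le> (u + t *\<^sub>R w) \<bullet> (A *v (u + t *\<^sub>R w))"
    using pd[of "u + t *\<^sub>R w"] by fastforce
  also have "\<dots> = a + 2 * t * b + t\<^sup>2 * c"
    using sym[of w u]
    by (simp add: a_def b_def c_def algebra_simps power2_eq_square)
  also have "\<dots> = a - b\<^sup>2 / c"
    using c by (simp add: t_def field_simps power2_eq_square)
  finally have "b\<^sup>2 \<le> a * c"
    using c by (simp add: field_simps)
  then show ?thesis by (simp add: a_def b_def c_def)
qed

lemma pos_def_quadratic_form_coercive: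
  fixes A :: "real^'n^'n"
  assumes pd: "\<And>h. h \<noteq> 0 \<Longrightarrow> 0 < h \<bullet> (A *v h)"
  obtains m where "m > 0" "\<And>v. m * (norm v)\<^sup>2 \<le> v \<bullet> (A *v v)"
proof -
  have cont: "continuous_on (sphere 0 1) (\<lambda>v. v \<bullet> (A *v v))"
    by (intro continuous_intros linear_continuous_on bounded_linear.linear) simp
  have "sphere (0::real^'n) 1 \<noteq> {}"
    using vector_choose_size[of 1] by auto
  then obtain v0 where v0: "v0 \<in> sphere 0 1" "\<And>y. y \<in> sphere 0 1 \<Longrightarrow> v0 \<bullet> (A *v v0) \<le> y \<bullet> (A *v y)"
    using continuous_attains_inf[OF compact_sphere _ cont] by blast
  have "v0 \<bullet> (A *v v0) * (norm v)\<^sup>2 \<le> v \<bullet> (A *v v)" for v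
  proof (cases "v = 0")
    case False
    have "v0 \<bullet> (A *v v0) \<le> (v /\<^sub>R norm v) \<bullet> (A *v (v /\<^sub>R norm v))"
      using False by (intro v0(2)) simp
    also have "\<dots> = v \<bullet> (A *v v) / (norm v)\<^sup>2"
      by (simp add: matrix_vector_mult_scaleR power2_eq_square field_simps)
    finally show ?thesis
      using False by (simp add: field_simps)
  qed simp
  moreover have "v0 \<bullet> (A *v v0) > 0"
    using v0(1) pd by (intro pd) auto
  ultimately show thesis using that by blast
qed

locale spd_at =
  fixes H :: "real^'n \<Rightarrow> real^'n^'n" and x :: "real^'n"
  assumes pos_def: "\<And>h. h \<noteq> 0 \<Longrightarrow> 0 < h \<bullet> (H x *v h)"
    and sym_form: "\<And>u w. u \<bullet> (H x *v w) = w \<bullet> (H x *v u)"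
begin

lemma quadratic_form_nonneg: "0 \<le> h \<bullet> (H x *v h)"
  using pos_def[of h] by (cases "h = 0") auto

lemma lnorm_nonneg: "0 \<le> lnorm H x h"
  unfolding lnorm_def using quadratic_form_nonneg by simp

lemma lnorm_power2: "(lnorm H x h)\<^sup>2 = h \<bullet> (H x *v h)"
  unfolding lnorm_def using quadratic_form_nonneg by simp

lemma lnorm_pos: "h \<noteq> 0 \<Longrightarrow> 0 < lnorm H x h"
  unfolding lnorm_def using pos_def by simp

lemma lnorm_scaleR: "lnorm H x (c *\<^sub>R h) = \<bar>c\<bar> * lnorm H x h"
proof -
  have "(c *\<^sub>R h) \<bullet> (H x *v (c *\<^sub>R h)) = c\<^sup>2 * (h \<bullet> (H x *v h))"
    by (simp add: matrix_vector_mult_scaleR power2_eq_square)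
  then show ?thesis
    unfolding lnorm_def by (simp add: real_sqrt_mult)
qed

lemma lnorm_minus: "lnorm H x (- h) = lnorm H x h"
  using lnorm_scaleR[of "-1" h] by simp

lemma matrix_inv_cancel: "H x *v (matrix_inv (H x) *v v) = v"
  using pos_def by (intro matrix_inv_cancel_injective) force

lemma dnorm_eq_lnorm: "dnorm H x v = lnorm H x (matrix_inv (H x) *v v)"
  unfolding dnorm_def lnorm_def by (metis matrix_inv_cancel inner_commute)

lemma dnorm_nonneg: "0 \<le> dnorm H x v"
  by (simp add: dnorm_eq_lnorm lnorm_nonneg)

lemma dnorm_power2: "(dnorm H x v)\<^sup>2 = (matrix_inv (H x) *v v) \<bullet> v"
  by (simp add: dnorm_eq_lnorm lnorm_power2 matrix_inv_cancel)

lemma dnorm_scaleR: "dnorm H x (c *\<^sub>R v) = \<bar>c\<bar> * dnorm H x v"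
  by (simp add: dnorm_eq_lnorm matrix_vector_mult_scaleR lnorm_scaleR)

lemma inner_le_lnorm_dnorm: "u \<bullet> v \<le> lnorm H x u * dnorm H x v"
proof -
  define a where "a = matrix_inv (H x) *v v"
  have v: "v = H x *v a"
    unfolding a_def by (rule matrix_inv_cancel[symmetric])
  have "(u \<bullet> v)\<^sup>2 \<le> (u \<bullet> (H x *v u)) * (a \<bullet> (H x *v a))"
    unfolding v by (rule pos_def_quadratic_form_Cauchy_Schwarz[OF pos_def sym_form])
  also have "\<dots> = (lnorm H x u * dnorm H x v)\<^sup>2"
    by (simp add: power_mult_distrib lnorm_power2 dnorm_eq_lnorm a_def)
  finally show ?thesis
    using lnorm_nonneg dnorm_nonneg
    by (metis abs_le_square_iff abs_of_nonneg mult_nonneg_nonneg abs_ge_self order_trans)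
qed

lemma dnorm_triangle: "dnorm H x (v + w) \<le> dnorm H x v + dnorm H x w"
proof -
  define a where "a = matrix_inv (H x) *v (v + w)"
  have "(dnorm H x (v + w))\<^sup>2 = a \<bullet> v + a \<bullet> w"
    by (simp add: a_def dnorm_power2 inner_add_right)
  also have "\<dots> \<le> lnorm H x a * dnorm H x v + lnorm H x a * dnorm H x w"
    by (intro add_mono inner_le_lnorm_dnorm)
  also have "\<dots> = dnorm H x (v + w) * (dnorm H x v + dnorm H x w)"
    by (simp add: a_def dnorm_eq_lnorm algebra_simps)
  finally show ?thesis
    using dnorm_nonneg by (smt (verit) mult_le_cancel_left power2_eq_square)
qed

lemma opnorm_bdd_above: "bdd_above ((\<lambda>v. dnorm H x (B *v v) / lnorm H x v) ` {v. v \<noteq> 0})"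
proof -
  obtain m where m: "m > 0" "\<And>v. m * (norm v)\<^sup>2 \<le> v \<bullet> (H x *v v)"
    using pos_def_quadratic_form_coercive[OF pos_def] by blast
  obtain K where K: "\<And>w. norm (matrix_inv (H x) *v w) \<le> norm w * K" "K \<ge> 0"
    using bounded_linear.pos_bounded[OF matrix_vector_mul_bounded_linear] by (meson less_imp_le)
  obtain K' where K': "\<And>w. norm (B *v w) \<le> norm w * K'" "K' \<ge> 0"
    using bounded_linear.pos_bounded[OF matrix_vector_mul_bounded_linear] by (meson less_imp_le)
  define C where "C = sqrt (K * K'\<^sup>2 / m)"
  have "dnorm H x (B *v v) / lnorm H x v \<le> C" if v: "v \<noteq> 0" for v
  proof -
    have "(dnorm H x (B *v v))\<^sup>2 \<le> norm (matrix_inv (H x) *v (B *v v)) * norm (B *v v)"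
      unfolding dnorm_power2 by (rule norm_cauchy_schwarz)
    also have "\<dots> \<le> (norm (B *v v) * K) * norm (B *v v)"
      by (intro mult_right_mono K) simp
    also have "\<dots> = K * (norm (B *v v))\<^sup>2"
      by (simp add: power2_eq_square)
    also have "\<dots> \<le> K * (norm v * K')\<^sup>2"
      by (intro mult_left_mono power_mono K' K) simp
    also have "\<dots> = (K * K'\<^sup>2 / m) * (m * (norm v)\<^sup>2)"
      using m by (simp add: field_simps power2_eq_square)
    also have "\<dots> \<le> (K * K'\<^sup>2 / m) * (lnorm H x v)\<^sup>2"
      using m K by (intro mult_left_mono) (auto simp: lnorm_power2)
    also have "\<dots> = (C * lnorm H x v)\<^sup>2"
      using m K by (simp add: C_def power_mult_distrib)
    finally have "dnorm H x (B *v v) \<le> C * lnorm H x v"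
      by (rule power2_le_imp_le) (use m K in \<open>simp add: C_def lnorm_nonneg\<close>)
    then show ?thesis
      using lnorm_pos[OF v] by (simp add: pos_divide_le_eq)
  qed
  then show ?thesis
    unfolding bdd_above_def by blast
qed

lemma dnorm_le_opnorm: "dnorm H x (B *v v) \<le> opnorm H x B * lnorm H x v"
proof (cases "v = 0")
  case False
  have "dnorm H x (B *v v) / lnorm H x v \<le> opnorm H x B"
    unfolding opnorm_def using False by (intro cSUP_upper[OF _ opnorm_bdd_above]) simp
  then show ?thesis
    using lnorm_pos[OF False] by (simp add: pos_divide_le_eq)
qed (simp add: dnorm_def lnorm_def)

end

lemma dnorm_le_sqrt_mult_dnorm:
  assumes y: "spd_at H y" and z: "spd_at H z" and k: "0 \<le> k"
    and le: "\<And>u. (lnorm H z u)\<^sup>2 \<le> k * (lnorm H y u)\<^sup>2"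
  shows "dnorm H y v \<le> sqrt k * dnorm H z v"
proof -
  define a where "a = matrix_inv (H y) *v v"
  have "lnorm H z a \<le> sqrt k * lnorm H y a"
    using real_sqrt_le_mono[OF le[of a]] spd_at.lnorm_nonneg[OF y] spd_at.lnorm_nonneg[OF z]
    by (simp add: real_sqrt_mult)
  then have a: "lnorm H z a \<le> sqrt k * dnorm H y v"
    by (simp add: a_def spd_at.dnorm_eq_lnorm[OF y])
  have "dnorm H y v * dnorm H y v = a \<bullet> v"
    by (simp add: a_def spd_at.dnorm_power2[OF y] flip: power2_eq_square)
  also have "\<dots> \<le> lnorm H z a * dnorm H z v"
    by (rule spd_at.inner_le_lnorm_dnorm[OF z])
  also have "\<dots> \<le> dnorm H y v * (sqrt k * dnorm H z v)"
    using mult_right_mono[OF a spd_at.dnorm_nonneg[OF z]] by (simp add: ac_simps)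
  finally show ?thesis
    using spd_at.dnorm_nonneg[OF y, of v] spd_at.dnorm_nonneg[OF z, of v] k
    by (smt (verit) mult_le_cancel_left real_sqrt_ge_zero zero_le_mult_iff)
qed

section \<open>Symmetry of the Hessian\<close>

lemma has_real_derivative_along_line:
  fixes f :: "real^'n \<Rightarrow> real"
  assumes grad: "\<And>x. (f has_derivative (\<lambda>h. g x \<bullet> h)) (at x)"
  shows "((\<lambda>t. f (p + t *\<^sub>R w)) has_real_derivative (g (p + t *\<^sub>R w) \<bullet> w)) (at t)"
proof -
  have "((\<lambda>t. p + t *\<^sub>R w) has_derivative (\<lambda>h. h *\<^sub>R w)) (at t)"
    by (auto intro!: derivative_eq_intros)
  from has_derivative_compose[OF this grad]
  show ?thesis
    unfolding has_field_derivative_def by (rule has_derivative_eq_rhs) (simp add: fun_eq_iff)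
qed

lemma inner_has_real_derivative_along_line:
  fixes g :: "real^'n \<Rightarrow> real^'n"
  assumes hess: "\<And>x. (g has_derivative (\<lambda>h. H x *v h)) (at x)"
  shows "((\<lambda>t. a \<bullet> g (p + t *\<^sub>R w)) has_real_derivative (a \<bullet> (H (p + t *\<^sub>R w) *v w))) (at t)"
proof -
  have "((\<lambda>t. p + t *\<^sub>R w) has_derivative (\<lambda>h. h *\<^sub>R w)) (at t)"
    by (auto intro!: derivative_eq_intros)
  from bounded_linear.has_derivative[OF bounded_linear_inner_right has_derivative_compose[OF this hess]]
  show ?thesis
    unfolding has_field_derivative_def
    by (rule has_derivative_eq_rhs) (simp add: fun_eq_iff matrix_vector_mult_scaleR)
qed

lemma second_difference_mean_value:
  fixes f :: "real^'n \<Rightarrow> real"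
  assumes grad: "\<And>x. (f has_derivative (\<lambda>h. g x \<bullet> h)) (at x)" and s: "0 < s"
  obtains \<tau> where "0 < \<tau>" "\<tau> < s"
    "f (x + s *\<^sub>R u + s *\<^sub>R w) - f (x + s *\<^sub>R u) - f (x + s *\<^sub>R w) + f x
       = s * ((g (x + s *\<^sub>R u + \<tau> *\<^sub>R w) - g (x + \<tau> *\<^sub>R w)) \<bullet> w)"
proof -
  define \<phi> where "\<phi> t = f (x + s *\<^sub>R u + t *\<^sub>R w) - f (x + t *\<^sub>R w)" for t
  have "(\<phi> has_real_derivative ((g (x + s *\<^sub>R u + t *\<^sub>R w) - g (x + t *\<^sub>R w)) \<bullet> w)) (at t)" for t
    unfolding \<phi>_def inner_diff_left by (intro DERIV_diff has_real_derivative_along_line[OF grad])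
  from MVT2[of 0 s \<phi>, OF s this] obtain \<tau> where "0 < \<tau>" "\<tau> < s"
    "\<phi> s - \<phi> 0 = (s - 0) * ((g (x + s *\<^sub>R u + \<tau> *\<^sub>R w) - g (x + \<tau> *\<^sub>R w)) \<bullet> w)"
    by blast
  then show thesis
    by (intro that) (auto simp: \<phi>_def)
qed

lemma gradient_difference_estimate:
  fixes g :: "real^'n \<Rightarrow> real^'n"
  assumes rem: "\<And>y. norm (y - x) < d \<Longrightarrow> norm (g y - g x - H x *v (y - x)) \<le> e * norm (y - x)"
    and e: "0 \<le> e" and \<tau>: "0 < \<tau>" "\<tau> < s" and d: "s * (norm u + norm w) < d"
  shows "norm (g (x + s *\<^sub>R u + \<tau> *\<^sub>R w) - g (x + \<tau> *\<^sub>R w) - s *\<^sub>R (H x *v u))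
           \<le> e * s * (norm u + 2 * norm w)"
proof -
  define y1 y2 where "y1 = x + s *\<^sub>R u + \<tau> *\<^sub>R w" and "y2 = x + \<tau> *\<^sub>R w"
  have \<tau>w: "\<tau> * norm w \<le> s * norm w"
    using \<tau> by (intro mult_right_mono) auto
  have n1: "norm (y1 - x) \<le> s * norm u + \<tau> * norm w"
    using norm_triangle_ineq[of "s *\<^sub>R u" "\<tau> *\<^sub>R w"] \<tau> by (simp add: y1_def)
  have n2: "norm (y2 - x) = \<tau> * norm w"
    using \<tau> by (simp add: y2_def)
  have "g y1 - g y2 - s *\<^sub>R (H x *v u)
      = (g y1 - g x - H x *v (y1 - x)) - (g y2 - g x - H x *v (y2 - x))"
    by (simp add: y1_def y2_def algebra_simps)
  also have "norm \<dots> \<le> e * norm (y1 - x) + e * norm (y2 - x)"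
    using rem[of y1] rem[of y2] n1 n2 \<tau>w d \<tau>
      norm_triangle_ineq4[of "g y1 - g x - H x *v (y1 - x)" "g y2 - g x - H x *v (y2 - x)"]
    by (smt (verit, best) distrib_left mult_nonneg_nonneg norm_ge_zero)
  also have "\<dots> \<le> e * (s * norm u + \<tau> * norm w) + e * (\<tau> * norm w)"
    using n1 n2 e by (intro add_mono mult_left_mono) auto
  also have "\<dots> \<le> e * s * (norm u + 2 * norm w)"
    using mult_left_mono[OF \<tau>w e] by (simp add: algebra_simps)
  finally show ?thesis
    by (simp add: y1_def y2_def)
qed

lemma second_difference_quotient_estimate:
  fixes f :: "real^'n \<Rightarrow> real"
  assumes grad: "\<And>x. (f has_derivative (\<lambda>h. g x \<bullet> h)) (at x)"
    and rem: "\<And>y. norm (y - x) < d \<Longrightarrow> norm (g y - g x - H x *v (y - x)) \<le> e * norm (y - x)"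
    and e: "0 \<le> e" and s: "0 < s" and d: "s * (norm u + norm w) < d"
  shows "dist ((f (x + s *\<^sub>R u + s *\<^sub>R w) - f (x + s *\<^sub>R u) - f (x + s *\<^sub>R w) + f x) / s\<^sup>2) (w \<bullet> (H x *v u))
           \<le> e * (norm w * (norm u + 2 * norm w))"
proof -
  obtain \<tau> where \<tau>: "0 < \<tau>" "\<tau> < s"
    and mv: "f (x + s *\<^sub>R u + s *\<^sub>R w) - f (x + s *\<^sub>R u) - f (x + s *\<^sub>R w) + f x
             = s * ((g (x + s *\<^sub>R u + \<tau> *\<^sub>R w) - g (x + \<tau> *\<^sub>R w)) \<bullet> w)"
    using second_difference_mean_value[OF grad s] by blast
  define r where "r = g (x + s *\<^sub>R u + \<tau> *\<^sub>R w) - g (x + \<tau> *\<^sub>R w) - s *\<^sub>R (H x *v u)"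
  have "r \<bullet> w = (g (x + s *\<^sub>R u + \<tau> *\<^sub>R w) - g (x + \<tau> *\<^sub>R w)) \<bullet> w - s * (w \<bullet> (H x *v u))"
    by (simp add: r_def inner_diff_left inner_commute[of "H x *v u"])
  then have "dist ((f (x + s *\<^sub>R u + s *\<^sub>R w) - f (x + s *\<^sub>R u) - f (x + s *\<^sub>R w) + f x) / s\<^sup>2) (w \<bullet> (H x *v u)) = \<bar>r \<bullet> w\<bar> / s"
    using s unfolding mv by (simp add: dist_real_def power2_eq_square field_simps)
  also have "\<dots> \<le> e * (norm w * (norm u + 2 * norm w))"
  proof -
    have "\<bar>r \<bullet> w\<bar> \<le> e * s * (norm u + 2 * norm w) * norm w"
      using Cauchy_Schwarz_ineq2[of r w]
        gradient_difference_estimate[where g=g and H=H, OF rem e \<tau> d, folded r_def]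
      by (smt (verit) mult_right_mono norm_ge_zero)
    then show ?thesis
      using s by (subst pos_divide_le_eq) (simp_all add: ac_simps)
  qed
  finally show ?thesis .
qed

lemma second_difference_tendsto:
  fixes f :: "real^'n \<Rightarrow> real"
  assumes grad: "\<And>x. (f has_derivative (\<lambda>h. g x \<bullet> h)) (at x)"
    and hess: "\<And>x. (g has_derivative (\<lambda>h. H x *v h)) (at x)"
  shows "((\<lambda>s. (f (x + s *\<^sub>R u + s *\<^sub>R w) - f (x + s *\<^sub>R u) - f (x + s *\<^sub>R w) + f x) / s\<^sup>2) \<longlongrightarrow> w \<bullet> (H x *v u)) (at_right 0)"
proof (rule tendsto_iff[THEN iffD2], intro allI impI)
  fix \<epsilon> :: real assume \<epsilon>: "0 < \<epsilon>"
  define C where "C = norm w * (norm u + 2 * norm w)"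
  define e where "e = \<epsilon> / (2 * (C + 1))"
  have C: "0 \<le> C"
    by (simp add: C_def)
  have e: "0 < e"
    using \<epsilon> C by (simp add: e_def)
  have "e * C = \<epsilon> * (C / (2 * (C + 1)))"
    by (simp add: e_def)
  also have "\<dots> < \<epsilon> * 1"
    using \<epsilon> C by (intro mult_strict_left_mono) (simp_all add: divide_less_eq)
  finally have eC: "e * C < \<epsilon>"
    by simp
  obtain d where d: "0 < d"
    and rem: "\<And>y. norm (y - x) < d \<Longrightarrow> norm (g y - g x - H x *v (y - x)) \<le> e * norm (y - x)"
    using hess[of x] e unfolding has_derivative_at_alt by blast
  define D where "D = d / (norm u + norm w + 1)"
  have "dist ((f (x + s *\<^sub>R u + s *\<^sub>R w) - f (x + s *\<^sub>R u) - f (x + s *\<^sub>R w) + f x) / s\<^sup>2) (w \<bullet> (H x *v u)) < \<epsilon>" if s: "0 < s" "s < D" for s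
  proof -
    have "s * (norm u + norm w) \<le> s * (norm u + norm w + 1)"
      using s by simp
    also have "\<dots> < d"
      using s by (simp add: D_def pos_less_divide_eq add_nonneg_pos)
    finally have "dist ((f (x + s *\<^sub>R u + s *\<^sub>R w) - f (x + s *\<^sub>R u) - f (x + s *\<^sub>R w) + f x) / s\<^sup>2) (w \<bullet> (H x *v u)) \<le> e * C"
      unfolding C_def using e s by (intro second_difference_quotient_estimate[where H=H, OF grad rem]) simp_all
    with eC show ?thesis by simp
  qed
  moreover have "0 < D"
    using d by (simp add: D_def add_nonneg_pos)
  ultimately show "\<forall>\<^sub>F s in at_right 0. dist ((f (x + s *\<^sub>R u + s *\<^sub>R w) - f (x + s *\<^sub>R u) - f (x + s *\<^sub>R w) + f x) / s\<^sup>2) (w \<bullet> (H x *v u)) < \<epsilon>"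
    unfolding eventually_at_right_field by blast
qed

lemma hessian_symmetric:
  fixes f :: "real^'n \<Rightarrow> real"
  assumes grad: "\<And>x. (f has_derivative (\<lambda>h. g x \<bullet> h)) (at x)"
    and hess: "\<And>x. (g has_derivative (\<lambda>h. H x *v h)) (at x)"
  shows "u \<bullet> (H x *v w) = w \<bullet> (H x *v u)"
proof -
  define Q where "Q u w s = (f (x + s *\<^sub>R u + s *\<^sub>R w) - f (x + s *\<^sub>R u) - f (x + s *\<^sub>R w) + f x) / s\<^sup>2"
    for u w s
  have "Q w u = Q u w"
    by (simp add: Q_def fun_eq_iff add_ac)
  then show ?thesis
    using second_difference_tendsto[OF grad hess, of x w u, folded Q_def]
      second_difference_tendsto[OF grad hess, of x u w, folded Q_def]
    by (intro tendsto_unique[OF trivial_limit_at_right_real]) simp_all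
qed

section \<open>Semi-strongly self-concordant Hessians\<close>

lemma semi_strongly_sc_mono:
  assumes spd: "\<And>x. spd_at H x" and semi: "semi_strongly_sc L0 H" and le: "L0 \<le> L"
  shows "semi_strongly_sc L H"
  unfolding semi_strongly_sc_def
proof (intro allI)
  fix x y
  have "L0 * lnorm H x (y - x) \<le> L * lnorm H x (y - x)"
    using le spd_at.lnorm_nonneg[OF spd] by (rule mult_right_mono)
  then show "opnorm H x (H y - H x) \<le> L * lnorm H x (y - x)"
    using semi unfolding semi_strongly_sc_def by (meson order_trans)
qed

locale semi_sc_hessian =
  fixes g :: "real^'n \<Rightarrow> real^'n" and H :: "real^'n \<Rightarrow> real^'n^'n" and L :: real
  assumes hess: "\<And>x. (g has_derivative (\<lambda>h. H x *v h)) (at x)"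
    and spd: "\<And>x. spd_at H x"
    and semi: "semi_strongly_sc L H"
begin

lemma inner_hessian_diff_le:
  "a \<bullet> ((H z - H y) *v v) \<le> L * lnorm H y (z - y) * lnorm H y a * lnorm H y v"
proof -
  interpret spd_at H y by (rule spd)
  have "a \<bullet> ((H z - H y) *v v) \<le> lnorm H y a * dnorm H y ((H z - H y) *v v)"
    by (rule inner_le_lnorm_dnorm)
  also have "\<dots> \<le> lnorm H y a * (opnorm H y (H z - H y) * lnorm H y v)"
    by (intro mult_left_mono dnorm_le_opnorm lnorm_nonneg)
  also have "\<dots> \<le> lnorm H y a * (L * lnorm H y (z - y) * lnorm H y v)"
    using semi unfolding semi_strongly_sc_def
    by (intro mult_left_mono mult_right_mono lnorm_nonneg) blast+
  finally show ?thesis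
    by (simp add: ac_simps)
qed

lemma lnorm_power2_le:
  "(lnorm H z u)\<^sup>2 \<le> (1 + L * lnorm H y (z - y)) * (lnorm H y u)\<^sup>2"
proof -
  have "u \<bullet> (H z *v u) - u \<bullet> (H y *v u) = u \<bullet> ((H z - H y) *v u)"
    by (simp add: matrix_vector_mult_diff_rdistrib inner_diff_right)
  also have "\<dots> \<le> L * lnorm H y (z - y) * (lnorm H y u)\<^sup>2"
    using inner_hessian_diff_le[of u z y u] by (simp add: power2_eq_square mult.assoc)
  finally show ?thesis
    by (simp add: spd_at.lnorm_power2[OF spd] algebra_simps)
qed

lemma dnorm_gradient_taylor_remainder_le:
  assumes L: "0 \<le> L"
  shows "dnorm H x (g (x + e) - g x - H x *v e) \<le> L / 2 * (lnorm H x e)\<^sup>2"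
proof -
  interpret spd_at H x by (rule spd)
  define r where "r = g (x + e) - g x - H x *v e"
  define N l where "N = dnorm H x r" and "l = lnorm H x e"
  define a where "a = matrix_inv (H x) *v r"
  \<comment> \<open>nonincreasing on \<open>[0, 1]\<close>; comparing its end values gives \<open>N\<^sup>2 \<le> N L l\<^sup>2 / 2\<close>\<close>
  define \<phi> where "\<phi> t = a \<bullet> g (x + t *\<^sub>R e) - t * (a \<bullet> (H x *v e)) - N * L * l\<^sup>2 * t\<^sup>2 / 2" for t
  have "\<phi> 1 \<le> \<phi> 0"
  proof (rule DERIV_nonpos_imp_nonincreasing[of 0 1])
    fix t :: real assume t: "0 \<le> t" "t \<le> 1"
    have "(\<phi> has_real_derivative
        a \<bullet> (H (x + t *\<^sub>R e) *v e) - a \<bullet> (H x *v e) - N * L * l\<^sup>2 * t) (at t)"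
      unfolding \<phi>_def
      by (rule derivative_eq_intros inner_has_real_derivative_along_line[OF hess] refl | simp)+
    moreover have "a \<bullet> (H (x + t *\<^sub>R e) *v e) - a \<bullet> (H x *v e) = a \<bullet> ((H (x + t *\<^sub>R e) - H x) *v e)"
      by (simp add: matrix_vector_mult_diff_rdistrib inner_diff_right)
    moreover have "\<dots> \<le> N * L * l\<^sup>2 * t"
      using inner_hessian_diff_le[of a "x + t *\<^sub>R e" x e] t
      by (simp add: N_def l_def a_def lnorm_scaleR dnorm_eq_lnorm power2_eq_square ac_simps)
    ultimately show "\<exists>y. (\<phi> has_real_derivative y) (at t) \<and> y \<le> 0"
      by auto
  qed simp
  moreover have "a \<bullet> r = N\<^sup>2"
    by (simp add: a_def N_def dnorm_power2)
  ultimately have "N * N \<le> N * (L / 2 * l\<^sup>2)"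
    by (simp add: \<phi>_def r_def power2_eq_square algebra_simps)
  moreover have "0 \<le> N"
    by (simp add: N_def dnorm_nonneg)
  ultimately have "N \<le> L / 2 * l\<^sup>2"
    using L by (cases "N = 0") (simp_all add: mult_le_cancel_left_pos)
  then show ?thesis
    by (simp add: N_def r_def l_def)
qed

end

section \<open>The AICN step\<close>

definition aicn_stepsize :: "real \<Rightarrow> real \<Rightarrow> real" where
  "aicn_stepsize L G = (-1 + sqrt (1 + 2 * L * G)) / (L * G)"

lemma aicn_alpha_eq_stepsize: "aicn_alpha L g H x = aicn_stepsize L (dnorm H x (g x))"
  by (simp add: aicn_alpha_def aicn_stepsize_def)

context
  fixes L G :: real
  assumes L: "0 < L" and G: "0 < G"
begin

lemma aicn_stepsize_scaled: "L * aicn_stepsize L G * G = sqrt (1 + 2 * L * G) - 1"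
  using L G by (simp add: aicn_stepsize_def)

lemma aicn_stepsize_pos: "0 < aicn_stepsize L G"
  using L G by (simp add: aicn_stepsize_def real_less_rsqrt)

lemma aicn_stepsize_less_one: "aicn_stepsize L G < 1"
proof -
  have "1 + 2 * L * G < (1 + L * G)\<^sup>2"
    using L G by (simp add: power2_eq_square algebra_simps)
  then have "sqrt (1 + 2 * L * G) < 1 + L * G"
    using L G by (intro real_less_lsqrt) auto
  then show ?thesis
    using L G by (simp add: aicn_stepsize_def divide_less_eq)
qed

lemma aicn_stepsize_equation: "1 - aicn_stepsize L G = L * (aicn_stepsize L G)\<^sup>2 * G / 2"
proof -
  define S where "S = sqrt (1 + 2 * L * G)"
  have S2: "S\<^sup>2 = 1 + 2 * L * G"
    using L G by (simp add: S_def)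
  have "S = 1 + L * aicn_stepsize L G * G"
    by (simp add: aicn_stepsize_scaled S_def)
  then have "(1 + L * aicn_stepsize L G * G)\<^sup>2 = 1 + 2 * L * G"
    using S2 by simp
  then have "(L * G) * (2 * (1 - aicn_stepsize L G)) = (L * G) * (L * (aicn_stepsize L G)\<^sup>2 * G)"
    by algebra
  then show ?thesis
    using L G by simp
qed

lemma aicn_stepsize_scaled_le:
  assumes b: "0 \<le> b" and le: "G \<le> ((b + 1)\<^sup>2 - 1) / (2 * L)"
  shows "L * aicn_stepsize L G * G \<le> b"
proof -
  have "1 + 2 * L * G \<le> (b + 1)\<^sup>2"
    using le L by (simp add: field_simps)
  then have "sqrt (1 + 2 * L * G) \<le> b + 1"
    using b by (intro real_le_lsqrt) auto
  then show ?thesis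
    by (simp add: aicn_stepsize_scaled)
qed

end

lemma sqrt_one_plus_le_inverse_one_minus:
  fixes c s q :: real
  assumes c: "0 < c" "c < 1" and s: "0 \<le> s" "s \<le> 2 * c" and q: "q \<le> s * sqrt (1 + s)"
  shows "sqrt (1 + q) \<le> 1 / (1 - c)"
proof -
  have "1 + s \<le> (1 + c)\<^sup>2"
    using s c by (simp add: power2_eq_square algebra_simps) (smt (verit) mult_pos_pos)
  then have "sqrt (1 + s) \<le> 1 + c"
    using c by (intro real_le_lsqrt) auto
  then have "q \<le> 2 * c * (1 + c)"
    using q s c by (smt (verit, best) mult_mono real_sqrt_ge_zero)
  then have "1 + q \<le> 1 + 2 * c + 2 * c\<^sup>2"
    by (simp add: power2_eq_square algebra_simps)
  also have "\<dots> \<le> (1 / (1 - c))\<^sup>2"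
  proof -
    have "(1 + 2 * c + 2 * c\<^sup>2) * (1 - c)\<^sup>2 = 1 - c\<^sup>2 * (1 + 2 * c * (1 - c))"
      by (simp add: power2_eq_square algebra_simps)
    also have "\<dots> \<le> 1"
      using c by simp
    finally show ?thesis
      using c by (simp add: field_simps)
  qed
  finally show ?thesis
    using c by (intro real_le_lsqrt) auto
qed

context semi_sc_hessian
begin

context
  fixes x :: "real^'n"
  assumes L_pos: "0 < L" and gradient_nonzero: "g x \<noteq> 0"
begin

lemma dnorm_gradient_pos: "0 < dnorm H x (g x)"
proof -
  interpret spd_at H x by (rule spd)
  have "matrix_inv (H x) *v g x \<noteq> 0"
    using matrix_inv_cancel[of "g x"] gradient_nonzero by auto
  then show ?thesis
    by (simp add: dnorm_eq_lnorm lnorm_pos)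
qed

lemma aicn_alpha_pos: "0 < aicn_alpha L g H x"
  using aicn_stepsize_pos[OF L_pos dnorm_gradient_pos] by (simp add: aicn_alpha_eq_stepsize)

lemma aicn_alpha_less_one: "aicn_alpha L g H x < 1"
  using aicn_stepsize_less_one[OF L_pos dnorm_gradient_pos] by (simp add: aicn_alpha_eq_stepsize)

lemma aicn_step_minus:
  "aicn_step L g H x - x = (- aicn_alpha L g H x) *\<^sub>R (matrix_inv (H x) *v g x)"
  by (simp add: aicn_step_def)

lemma hessian_aicn_step: "H x *v (aicn_step L g H x - x) = (- aicn_alpha L g H x) *\<^sub>R g x"
  by (simp only: aicn_step_minus matrix_vector_mult_scaleR spd_at.matrix_inv_cancel[OF spd])

lemma lnorm_aicn_step: "lnorm H x (aicn_step L g H x - x) = aicn_alpha L g H x * dnorm H x (g x)"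
  unfolding aicn_step_minus spd_at.lnorm_scaleR[OF spd] spd_at.dnorm_eq_lnorm[OF spd]
  using aicn_alpha_pos by simp

lemma dnorm_gradient_aicn_step_le:
  "dnorm H x (g (aicn_step L g H x)) \<le> L * (aicn_alpha L g H x)\<^sup>2 * (dnorm H x (g x))\<^sup>2"
proof -
  interpret spd_at H x by (rule spd)
  define \<alpha> G e where "\<alpha> = aicn_alpha L g H x" and "G = dnorm H x (g x)"
    and "e = aicn_step L g H x - x"
  have "H x *v e = (- \<alpha>) *\<^sub>R g x"
    by (simp add: e_def \<alpha>_def hessian_aicn_step)
  then have "g (aicn_step L g H x) = (g (x + e) - g x - H x *v e) + (1 - \<alpha>) *\<^sub>R g x"
    by (simp add: e_def algebra_simps)
  then have "dnorm H x (g (aicn_step L g H x))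
      \<le> dnorm H x (g (x + e) - g x - H x *v e) + dnorm H x ((1 - \<alpha>) *\<^sub>R g x)"
    by (simp only: dnorm_triangle)
  also have "\<dots> = dnorm H x (g (x + e) - g x - H x *v e) + (1 - \<alpha>) * G"
    using aicn_alpha_less_one by (simp add: dnorm_scaleR G_def \<alpha>_def)
  also have "\<dots> \<le> L / 2 * (\<alpha> * G)\<^sup>2 + (1 - \<alpha>) * G"
    using dnorm_gradient_taylor_remainder_le[of x e] L_pos
    by (simp add: e_def lnorm_aicn_step \<alpha>_def G_def)
  also have "\<dots> = L * \<alpha>\<^sup>2 * G\<^sup>2"
  proof -
    have "(1 - \<alpha>) * G = L * \<alpha>\<^sup>2 * G / 2 * G"
      using aicn_stepsize_equation[OF L_pos dnorm_gradient_pos]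
      by (simp add: \<alpha>_def G_def aicn_alpha_eq_stepsize)
    then show ?thesis
      by (simp add: power2_eq_square algebra_simps)
  qed
  finally show ?thesis
    by (simp add: \<alpha>_def G_def)
qed

lemma dnorm_gradient_aicn_step_at_step_le:
  assumes c: "0 < c" "c < 1" and G: "dnorm H x (g x) \<le> ((2 * c + 1)\<^sup>2 - 1) / (2 * L)"
  defines "x' \<equiv> aicn_step L g H x"
  shows "dnorm H x' (g x') \<le> L * (aicn_alpha L g H x)\<^sup>2 / (1 - c) * (dnorm H x (g x))\<^sup>2"
proof -
  define \<alpha> G where "\<alpha> = aicn_alpha L g H x" and "G = dnorm H x (g x)"
  define s r where "s = L * \<alpha> * G" and "r = lnorm H x' (x - x')"
  have \<alpha>G: "0 < \<alpha> * G"
    using aicn_alpha_pos dnorm_gradient_pos by (simp add: \<alpha>_def G_def)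
  have s: "0 \<le> s" "s \<le> 2 * c"
    using L_pos aicn_alpha_pos dnorm_gradient_pos c G
      aicn_stepsize_scaled_le[OF L_pos dnorm_gradient_pos, of "2 * c"]
    by (simp_all add: s_def \<alpha>_def G_def aicn_alpha_eq_stepsize)
  have step: "lnorm H x (x' - x) = \<alpha> * G"
    by (simp add: x'_def lnorm_aicn_step \<alpha>_def G_def)
  then have step': "lnorm H x (x - x') = \<alpha> * G"
    using spd_at.lnorm_minus[OF spd, of x "x' - x"] by simp
  have "r\<^sup>2 \<le> (1 + L * lnorm H x (x' - x)) * (lnorm H x (x - x'))\<^sup>2"
    unfolding r_def by (rule lnorm_power2_le)
  also have "\<dots> = (sqrt (1 + s) * (\<alpha> * G))\<^sup>2"
    using s by (simp add: step step' s_def power_mult_distrib mult.assoc)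
  finally have "r \<le> sqrt (1 + s) * (\<alpha> * G)"
    by (rule power2_le_imp_le) (use \<alpha>G s in simp)
  then have "L * r \<le> L * (sqrt (1 + s) * (\<alpha> * G))"
    using L_pos by (simp add: mult_left_mono)
  also have "\<dots> = s * sqrt (1 + s)"
    by (simp add: s_def ac_simps)
  finally have "L * r \<le> s * sqrt (1 + s)" .
  then have factor: "sqrt (1 + L * r) \<le> 1 / (1 - c)"
    by (rule sqrt_one_plus_le_inverse_one_minus[OF c s])
  have "dnorm H x' (g x') \<le> sqrt (1 + L * r) * dnorm H x (g x')"
    using L_pos spd_at.lnorm_nonneg[OF spd] lnorm_power2_le
    by (intro dnorm_le_sqrt_mult_dnorm spd) (simp_all add: r_def)
  also have "\<dots> \<le> 1 / (1 - c) * (L * \<alpha>\<^sup>2 * G\<^sup>2)"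
    using factor dnorm_gradient_aicn_step_le spd_at.dnorm_nonneg[OF spd] c
    by (intro mult_mono) (simp_all add: x'_def \<alpha>_def G_def)
  finally show ?thesis
    by (simp add: \<alpha>_def G_def)
qed

lemma dnorm_gradient_aicn_step_at_step_le_dnorm:
  assumes c: "0 < c" "c < 1" and G: "dnorm H x (g x) \<le> ((2 * c + 1)\<^sup>2 - 1) / (2 * L)"
    and G': "dnorm H x (g x) \<le> ((2 - c)\<^sup>2 - 1) / (2 * L)"
  defines "x' \<equiv> aicn_step L g H x"
  shows "dnorm H x' (g x') \<le> dnorm H x (g x)"
proof -
  define \<alpha> G where "\<alpha> = aicn_alpha L g H x" and "G = dnorm H x (g x)"
  have \<alpha>G: "0 < \<alpha> * G"
    using aicn_alpha_pos dnorm_gradient_pos by (simp add: \<alpha>_def G_def)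
  have "L * \<alpha> * G \<le> 1 - c"
    using aicn_stepsize_scaled_le[OF L_pos dnorm_gradient_pos, of "1 - c"] c G'
    by (simp add: \<alpha>_def G_def aicn_alpha_eq_stepsize)
  then have ratio: "L * \<alpha> * G / (1 - c) \<le> 1"
    using c by simp
  have "L * \<alpha>\<^sup>2 / (1 - c) * G\<^sup>2 = \<alpha> * G * (L * \<alpha> * G / (1 - c))"
    by (simp add: power2_eq_square)
  also have "\<dots> \<le> \<alpha> * G"
    using ratio \<alpha>G by (intro mult_left_le) simp_all
  also have "\<dots> \<le> G"
    using aicn_alpha_less_one dnorm_gradient_pos by (simp add: \<alpha>_def G_def)
  finally have "L * \<alpha>\<^sup>2 / (1 - c) * G\<^sup>2 \<le> G" .
  with dnorm_gradient_aicn_step_at_step_le[OF c G] show ?thesis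
    unfolding x'_def \<alpha>_def G_def by linarith
qed

end

end

theorem lemma8:
  fixes f :: "real^'n \<Rightarrow> real"
    and g :: "real^'n \<Rightarrow> real^'n"
    and H :: "real^'n \<Rightarrow> real^'n^'n"
    and Lsemi Lest c :: real
    and xk :: "real^'n"
  assumes convex: "convex_on UNIV f"
    and grad: "\<And>x. (f has_derivative (\<lambda>h. g x \<bullet> h)) (at x)"
    and hess: "\<And>x. (g has_derivative (\<lambda>h. H x *v h)) (at x)"
    and hess_cont: "continuous_on UNIV H"
    and pd: "\<And>x h. h \<noteq> 0 \<Longrightarrow> h \<bullet> (H x *v h) > 0"
    and semi: "semi_strongly_sc Lsemi H"
    and Lest_pos: "0 < Lest"
    and Lest_ge: "Lsemi \<le> Lest"
    and gnz: "g xk \<noteq> 0"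
  defines "\<alpha> \<equiv> aicn_alpha Lest g H xk"
    and "xk1 \<equiv> aicn_step Lest g H xk"
  shows "(dnorm H xk (g xk1) \<le> Lest * \<alpha>\<^sup>2 * (dnorm H xk (g xk))\<^sup>2
          \<and> Lest * \<alpha>\<^sup>2 * (dnorm H xk (g xk))\<^sup>2 < Lest * (dnorm H xk (g xk))\<^sup>2)
    \<and> (0 < c \<and> c < 1 \<and> dnorm H xk (g xk) \<le> ((2*c+1)\<^sup>2 - 1) / (2 * Lest) \<longrightarrow>
         dnorm H xk1 (g xk1) \<le> Lest * \<alpha>\<^sup>2 / (1 - c) * (dnorm H xk (g xk))\<^sup>2)
    \<and> (0 < c \<and> c < 1 \<and> dnorm H xk (g xk) \<le> ((2*c+1)\<^sup>2 - 1) / (2 * Lest)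
         \<and> dnorm H xk (g xk) \<le> ((2-c)\<^sup>2 - 1) / (2 * Lest) \<longrightarrow>
         dnorm H xk1 (g xk1) \<le> dnorm H xk (g xk))"
proof -
  have spd: "spd_at H y" for y
    by unfold_locales (auto intro: pd hessian_symmetric[OF grad hess])
  interpret semi_sc_hessian g H Lest
    by (rule semi_sc_hessian.intro[OF hess spd semi_strongly_sc_mono[OF spd semi Lest_ge]])
  note G_pos = dnorm_gradient_pos[OF Lest_pos gnz]
  have "\<alpha>\<^sup>2 < 1"
    using aicn_alpha_pos[OF Lest_pos gnz] aicn_alpha_less_one[OF Lest_pos gnz]
    by (simp add: \<alpha>_def power_less_one_iff)
  then have "Lest * \<alpha>\<^sup>2 * (dnorm H xk (g xk))\<^sup>2 < Lest * (dnorm H xk (g xk))\<^sup>2"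
    using Lest_pos G_pos by simp
  then show ?thesis
    using dnorm_gradient_aicn_step_le[OF Lest_pos gnz]
      dnorm_gradient_aicn_step_at_step_le[OF Lest_pos gnz, of c]
      dnorm_gradient_aicn_step_at_step_le_dnorm[OF Lest_pos gnz, of c]
    unfolding \<alpha>_def xk1_def by blast
qed

end
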